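(* Let $\theta\in\mathbb R\setminus\mathbb Q$. Then $H^0(\mathcal A_\theta^{alg},{}_{-1}\mathcal A_\theta^{alg*})\cong\mathbb C^4$, and every class is $\mathbb Z_2$-invariant, so $H^0(\mathcal A_\theta^{alg},{}_{-1}\mathcal A_\theta^{alg*})^{\mathbb Z_2}\cong\mathbb C^4$. A basis is given by the four cocycles $\mathcal D_{a,b}$, $a,b\in\{0,1\}$, where $\mathcal D_{a,b}$ is the element $\sum\varphi_{n,m}U_1^nU_2^m$ of ${}_{-1}\mathcal A_\theta^{alg*}$ supported on $(n,m)\equiv(a,b)\pmod 2$ satisfying $U_1^{-1}\varphi=\varphi U_1$, $U_2^{-1}\varphi=\varphi U_2$ and $\varphi_{a,b}=1$.
   Context: Let $\lambda=e^{2\pi i\theta}$. $\mathcal A_\theta^{alg}$ is the complex algebra of finite linear combinations $\sum a_{n,m}U_1^nU_2^m$ generated by invertible $U_1,U_2$ with $U_2U_1=\lambda U_1U_2$. Its linear dual $\mathcal A_\theta^{alg*}$ is identified with the space of formal (arbitrary, not necessarily finitely supported) series $\sum_{(n,m)\in\mathbb Z^2}\varphi_{n,m}U_1^nU_2^m$ with the standard bimodule structure. $\mathbb Z_2$ acts on $\mathcal A_\theta^{alg}$ (and hence on $\mathcal A_\theta^{alg*}$ and on the cohomology) by the involution $\sigma(U_j)=U_j^{-1}$. ${}_{-1}\mathcal A_\theta^{alg*}$ is $\mathcal A_\theta^{alg*}$ with the bimodule structure twisted on the left: $\alpha\cdot a=\sigma(\alpha)a$, $a\cdot\alpha=a\alpha$.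 $H^\bullet(A,M)$ is Hochschild cohomology, and $(\cdot)^{\mathbb Z_2}$ denotes the invariants of the induced $\mathbb Z_2$-action. *)

theory Defs
  imports Complex_Main
begin

text \<open>Elements of the algebraic noncommutative torus and of its dual are both
represented by their coefficient functions on int x int: the coefficient at (n,m)
is the coefficient of U1^n U2^m.  Elements of the algebra have finite support;
elements of the dual are arbitrary formal series.\<close>

definition lam :: "real \<Rightarrow> complex" where
  "lam \<theta> = cis (2 * pi * \<theta>)"

definition alg :: "(int \<times> int \<Rightarrow> complex) set" where
  "alg = {f. finite {k. f k \<noteq> 0}}"

definition mono :: "int \<Rightarrow> int \<Rightarrow> int \<times> int \<Rightarrow> complex" where
  "mono n m = (\<lambda>k. if k = (n, m) then 1 else 0)"

text \<open>Left multiplication of a formal series by an algebra element, using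
U1^p U2^q U1^n' U2^m' = lam^(q n') U1^(p+n') U2^(q+m').\<close>
definition lmul :: "real \<Rightarrow> (int \<times> int \<Rightarrow> complex) \<Rightarrow> (int \<times> int \<Rightarrow> complex) \<Rightarrow> (int \<times> int \<Rightarrow> complex)" where
  "lmul \<theta> a \<phi> = (\<lambda>(n, m). \<Sum>(p, q)\<in>{k. a k \<noteq> 0}.
      a (p, q) * \<phi> (n - p, m - q) * lam \<theta> powi (q * (n - p)))"

definition rmul :: "real \<Rightarrow> (int \<times> int \<Rightarrow> complex) \<Rightarrow> (int \<times> int \<Rightarrow> complex) \<Rightarrow> (int \<times> int \<Rightarrow> complex)" where
  "rmul \<theta> \<phi> a = (\<lambda>(n, m). \<Sum>(p, q)\<in>{k. a k \<noteq> 0}.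
      \<phi> (n - p, m - q) * a (p, q) * lam \<theta> powi ((m - q) * p))"

text \<open>The involution sigma(U_j) = U_j^{-1}, i.e. U1^n U2^m maps to U1^-n U2^-m;
the same formula gives the induced Z2-action on the dual (formal series).\<close>
definition sigma :: "(int \<times> int \<Rightarrow> complex) \<Rightarrow> (int \<times> int \<Rightarrow> complex)" where
  "sigma f = (\<lambda>(n, m). f (- n, - m))"

text \<open>Left action in the twisted bimodule {}_{-1}A*: alpha . a = sigma(alpha) a.\<close>
definition tw_lmul :: "real \<Rightarrow> (int \<times> int \<Rightarrow> complex) \<Rightarrow> (int \<times> int \<Rightarrow> complex) \<Rightarrow> (int \<times> int \<Rightarrow> complex)" where
  "tw_lmul \<theta> a \<phi> = lmul \<theta> (sigma a) \<phi>"

definition H0_tw :: "real \<Rightarrow> (int \<times> int \<Rightarrow> complex) set" where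
  "H0_tw \<theta> = {\<phi>. \<forall>a\<in>alg. tw_lmul \<theta> a \<phi> = rmul \<theta> \<phi> a}"

definition D_cond :: "real \<Rightarrow> int \<Rightarrow> int \<Rightarrow> (int \<times> int \<Rightarrow> complex) \<Rightarrow> bool" where
  "D_cond \<theta> a b \<phi> \<longleftrightarrow>
     (\<forall>n m. \<phi> (n, m) \<noteq> 0 \<longrightarrow> (n - a) mod 2 = 0 \<and> (m - b) mod 2 = 0) \<and>
     lmul \<theta> (mono (-1) 0) \<phi> = rmul \<theta> \<phi> (mono 1 0) \<and>
     lmul \<theta> (mono 0 (-1)) \<phi> = rmul \<theta> \<phi> (mono 0 1) \<and>
     \<phi> (a, b) = 1"

definition D :: "real \<Rightarrow> int \<Rightarrow> int \<Rightarrow> (int \<times> int \<Rightarrow> complex)" where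
  "D \<theta> a b = (THE \<phi>. D_cond \<theta> a b \<phi>)"

end

theory Submission imports Defs begin

(* Write L = lam theta.  A formal series phi lies in H^0(A, {}_{-1}A* )
   iff sigma(alpha) phi = phi alpha for all alpha; by linearity it suffices to test
   monomials, and for the generators U1, U2 this says
       phi(x+2, y) = L^y phi(x, y)      and      phi(x, y+2) = L^x phi(x, y).
   Iterating, phi is "quasi-periodic": phi(x+2p, y+2q) = L^(q(x+2p)+yp) phi(x, y),
   and conversely every quasi-periodic series commutes (in the twisted sense) with
   every monomial, hence with the whole algebra.  A quasi-periodic series is thus
   determined by its four values at (a,b) in {0,1}^2, namely
       phi(n,m) = phi(a,b) L^((nm-ab)/2)   for (n,m) = (a,b) mod 2,
   which exhibits the explicit basis D_{a,b} (the series with phi(a,b) = 1 supported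
   on one parity class) and the sigma-invariance phi(-n,-m) = phi(n,m). *)

lemma lam_nonzero: "lam \<theta> \<noteq> 0"
  by (simp add: lam_def)

lemma int_geometric:
  fixes f :: "int \<Rightarrow> 'a::field"
  assumes c: "c \<noteq> 0" and rec: "\<And>p. f (p + 1) = c * f p"
  shows "f p = c powi p * f 0"
proof (induction p rule: int_induct[where k = 0])
  case base
  show ?case by simp
next
  case (step1 i)
  then show ?case using c by (simp add: rec power_int_add)
next
  case (step2 i)
  have "f i = c * f (i - 1)" using rec[of "i - 1"] by simp
  then have "f (i - 1) = f i / c" using c by (simp add: field_simps)
  with step2 show ?case using c by (simp add: power_int_diff)
qed

lemma support_mono: "{k. mono p q k \<noteq> 0} = {(p, q)}"
  by (auto simp: mono_def)

lemma mono_alg: "mono p q \<in> alg"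
  by (simp add: alg_def support_mono)

lemma lmul_mono: "lmul \<theta> (mono p q) \<phi> (n, m) = \<phi> (n - p, m - q) * lam \<theta> powi (q * (n - p))"
  by (simp add: lmul_def support_mono, simp add: mono_def)

lemma rmul_mono: "rmul \<theta> \<phi> (mono p q) (n, m) = \<phi> (n - p, m - q) * lam \<theta> powi ((m - q) * p)"
  by (simp add: rmul_def support_mono, simp add: mono_def)

lemma sigma_mono: "sigma (mono p q) = mono (- p) (- q)"
  by (auto simp: sigma_def mono_def fun_eq_iff)

text \<open>The generator relations, read off at (n,m), relate the coefficients at n+1 and
  n-1; this re-centres them as relations between x+2 and x.\<close>
lemma shift_centre: "(\<forall>n::int. P (n + 1) (n - 1)) \<longleftrightarrow> (\<forall>x. P (x + 2) x)"
proof (intro iffI allI)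
  fix x :: int
  assume "\<forall>n. P (n + 1) (n - 1)"
  then have "P ((x + 1) + 1) ((x + 1) - 1)" by blast
  then show "P (x + 2) x" by (simp add: add.assoc)
next
  fix n :: int
  assume "\<forall>x. P (x + 2) x"
  then have "P ((n - 1) + 2) (n - 1)" by blast
  then show "P (n + 1) (n - 1)" by (simp add: algebra_simps)
qed

lemma generator_relations_iff_steps:
  "(lmul \<theta> (mono (-1) 0) \<phi> = rmul \<theta> \<phi> (mono 1 0) \<and>
    lmul \<theta> (mono 0 (-1)) \<phi> = rmul \<theta> \<phi> (mono 0 1)) \<longleftrightarrow>
   (\<forall>x y. \<phi> (x + 2, y) = lam \<theta> powi y * \<phi> (x, y) \<and>
          \<phi> (x, y + 2) = lam \<theta> powi x * \<phi> (x, y))"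
proof -
  let ?L = "lam \<theta>"
  have rel1: "lmul \<theta> (mono (-1) 0) \<phi> = rmul \<theta> \<phi> (mono 1 0) \<longleftrightarrow>
      (\<forall>m n. \<phi> (n + 1, m) = ?L powi m * \<phi> (n - 1, m))"
    by (auto simp: fun_eq_iff lmul_mono rmul_mono mult.commute)
  have rel2: "lmul \<theta> (mono 0 (-1)) \<phi> = rmul \<theta> \<phi> (mono 0 1) \<longleftrightarrow>
      (\<forall>n m. \<phi> (n, m + 1) = ?L powi n * \<phi> (n, m - 1))"
  proof -
    have "\<phi> (n, m + 1) * ?L powi (- n) = \<phi> (n, m - 1) \<longleftrightarrow>
          \<phi> (n, m + 1) = ?L powi n * \<phi> (n, m - 1)" for n m
      using lam_nonzero by (auto simp: power_int_minus field_simps)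
    then show ?thesis by (auto simp: fun_eq_iff lmul_mono rmul_mono)
  qed
  have s1: "(\<forall>n. \<phi> (n + 1, m) = ?L powi m * \<phi> (n - 1, m)) \<longleftrightarrow>
      (\<forall>x. \<phi> (x + 2, m) = ?L powi m * \<phi> (x, m))" for m
    by (rule shift_centre[where P = "\<lambda>u v. \<phi> (u, m) = ?L powi m * \<phi> (v, m)"])
  have s2: "(\<forall>m. \<phi> (n, m + 1) = ?L powi n * \<phi> (n, m - 1)) \<longleftrightarrow>
      (\<forall>y. \<phi> (n, y + 2) = ?L powi n * \<phi> (n, y))" for n
    by (rule shift_centre[where P = "\<lambda>u v. \<phi> (n, u) = ?L powi n * \<phi> (n, v)"])
  show ?thesis unfolding rel1 rel2 s1 s2 by blast
qed

section \<open>Quasi-periodic series\<close>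

text \<open>The closed form of the two step relations: translating by (2p, 2q) multiplies
  the coefficient by L^(q(x+2p) + yp).\<close>
definition quasi_periodic :: "complex \<Rightarrow> (int \<times> int \<Rightarrow> complex) \<Rightarrow> bool" where
  "quasi_periodic L \<phi> \<longleftrightarrow>
     (\<forall>x y p q. \<phi> (x + 2 * p, y + 2 * q) = L powi (q * (x + 2 * p) + y * p) * \<phi> (x, y))"

lemma quasi_periodic_steps:
  assumes "quasi_periodic L \<phi>"
  shows "\<phi> (x + 2, y) = L powi y * \<phi> (x, y)" and "\<phi> (x, y + 2) = L powi x * \<phi> (x, y)"
  using assms[unfolded quasi_periodic_def, rule_format, of x 1 y 0]
    assms[unfolded quasi_periodic_def, rule_format, of x 0 y 1] by simp_all

text \<open>Conversely the step relations iterate to quasi-periodicity (L must be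
  invertible to iterate backwards).\<close>
lemma steps_imp_quasi_periodic:
  assumes L: "L \<noteq> 0"
    and step_x: "\<And>x y. \<phi> (x + 2, y) = L powi y * \<phi> (x, y)"
    and step_y: "\<And>x y. \<phi> (x, y + 2) = L powi x * \<phi> (x, y)"
  shows "quasi_periodic L \<phi>"
  unfolding quasi_periodic_def
proof (intro allI)
  fix x y p q
  have rec_x: "\<phi> (x + 2 * (p' + 1), y) = L powi y * \<phi> (x + 2 * p', y)" for p'
    using step_x[of "x + 2 * p'" y] by (simp add: algebra_simps)
  have rec_y: "\<phi> (x', y + 2 * (q' + 1)) = L powi x' * \<phi> (x', y + 2 * q')" for x' q'
    using step_y[of x' "y + 2 * q'"] by (simp add: algebra_simps)
  have along_x: "\<phi> (x + 2 * p, y) = L powi (y * p) * \<phi> (x, y)"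
    using int_geometric[of "L powi y" "\<lambda>p. \<phi> (x + 2 * p, y)", OF _ rec_x] L
    by (simp add: power_int_mult)
  have along_y: "\<phi> (x', y + 2 * q) = L powi (x' * q) * \<phi> (x', y)" for x'
    using int_geometric[of "L powi x'" "\<lambda>q. \<phi> (x', y + 2 * q)", OF _ rec_y] L
    by (simp add: power_int_mult)
  have "\<phi> (x + 2 * p, y + 2 * q) = L powi ((x + 2 * p) * q) * (L powi (y * p) * \<phi> (x, y))"
    by (simp add: along_x along_y)
  also have "\<dots> = L powi (q * (x + 2 * p) + y * p) * \<phi> (x, y)"
    using L by (simp add: power_int_add mult.commute)
  finally show "\<phi> (x + 2 * p, y + 2 * q) = L powi (q * (x + 2 * p) + y * p) * \<phi> (x, y)" .
qed

lemma generator_relations_iff_quasi_periodic: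
  "(lmul \<theta> (mono (-1) 0) \<phi> = rmul \<theta> \<phi> (mono 1 0) \<and>
    lmul \<theta> (mono 0 (-1)) \<phi> = rmul \<theta> \<phi> (mono 0 1)) \<longleftrightarrow> quasi_periodic (lam \<theta>) \<phi>"
  unfolding generator_relations_iff_steps
  using quasi_periodic_steps steps_imp_quasi_periodic[OF lam_nonzero] by blast

text \<open>Every quasi-periodic series satisfies the twisted commutation relation with all
  elements of the algebra: both sides are sums over the support of alpha, and
  quasi-periodicity matches their terms one by one.\<close>
lemma quasi_periodic_imp_H0:
  assumes Q: "quasi_periodic (lam \<theta>) \<phi>"
  shows "\<phi> \<in> H0_tw \<theta>"
  unfolding H0_tw_def
proof (intro CollectI ballI ext, clarify)
  fix a :: "int \<times> int \<Rightarrow> complex" and n m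
  define L where "L = lam \<theta>"
  have L: "L \<noteq> 0" by (simp add: L_def lam_nonzero)
  define S where "S = {k. a k \<noteq> 0}"
  define neg where "neg = (\<lambda>(p::int, q::int). (- p, - q))"
  have inj: "inj_on neg S" by (auto simp: neg_def inj_on_def)
  have support: "{k. sigma a k \<noteq> 0} = neg ` S"
    by (auto simp: S_def neg_def sigma_def image_iff) (metis minus_minus)
  have term_eq: "a (p, q) * \<phi> (n + p, m + q) * L powi (- (q * (n + p)))
      = \<phi> (n - p, m - q) * a (p, q) * L powi ((m - q) * p)" for p q
  proof -
    have e: "\<phi> (n + p, m + q) = L powi (q * (n + p) + (m - q) * p) * \<phi> (n - p, m - q)"
      using Q[unfolded quasi_periodic_def, rule_format, of "n - p" p "m - q" q]
      by (simp add: L_def algebra_simps)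
    have "L powi (q * (n + p) + (m - q) * p) * L powi (- (q * (n + p))) = L powi ((m - q) * p)"
      using L by (simp flip: power_int_add)
    then show ?thesis by (simp add: e)
  qed
  have "tw_lmul \<theta> a \<phi> (n, m)
      = (\<Sum>(p, q)\<in>neg ` S. sigma a (p, q) * \<phi> (n - p, m - q) * L powi (q * (n - p)))"
    by (simp add: tw_lmul_def lmul_def support L_def)
  also have "\<dots> = (\<Sum>(p, q)\<in>S. a (p, q) * \<phi> (n + p, m + q) * L powi (- q * (n + p)))"
    by (subst sum.reindex[OF inj]) (auto simp: neg_def sigma_def intro!: sum.cong)
  also have "\<dots> = (\<Sum>(p, q)\<in>S. \<phi> (n - p, m - q) * a (p, q) * L powi ((m - q) * p))"
    by (rule sum.cong) (auto simp: term_eq)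
  also have "\<dots> = rmul \<theta> \<phi> a (n, m)"
    by (simp add: rmul_def S_def L_def)
  finally show "tw_lmul \<theta> a \<phi> (n, m) = rmul \<theta> \<phi> a (n, m)" .
qed

lemma H0_tw_iff_quasi_periodic: "\<phi> \<in> H0_tw \<theta> \<longleftrightarrow> quasi_periodic (lam \<theta>) \<phi>"
proof
  assume H0: "\<phi> \<in> H0_tw \<theta>"
  have "lmul \<theta> (sigma (mono p q)) \<phi> = rmul \<theta> \<phi> (mono p q)" for p q
    using H0 mono_alg[of p q] unfolding H0_tw_def tw_lmul_def by blast
  then have "lmul \<theta> (mono (- p) (- q)) \<phi> = rmul \<theta> \<phi> (mono p q)" for p q
    by (simp add: sigma_mono)
  from this[of 1 0] this[of 0 1] show "quasi_periodic (lam \<theta>) \<phi>"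
    by (simp add: generator_relations_iff_quasi_periodic[symmetric])
qed (rule quasi_periodic_imp_H0)

section \<open>The explicit cocycles\<close>

lemma quasi_periodic_value:
  assumes Q: "quasi_periodic L \<phi>" and "even (n - a)" "even (m - b)"
  shows "\<phi> (n, m) = \<phi> (a, b) * L powi ((n * m - a * b) div 2)"
proof -
  obtain p q where n: "n = a + 2 * p" and m: "m = b + 2 * q"
    using assms(2,3) by (metis add.commute diff_add_cancel evenE)
  have "(n * m - a * b) div 2 = q * (a + 2 * p) + b * p"
    by (simp add: n m algebra_simps)
  then show ?thesis
    using Q[unfolded quasi_periodic_def, rule_format, of a p b q] by (simp add: n m mult.commute)
qed

definition D_explicit :: "complex \<Rightarrow> int \<Rightarrow> int \<Rightarrow> int \<times> int \<Rightarrow> complex" where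
  "D_explicit L a b = (\<lambda>(n, m).
     if even (n - a) \<and> even (m - b) then L powi ((n * m - a * b) div 2) else 0)"

lemma quasi_periodic_D_explicit:
  assumes L: "L \<noteq> 0"
  shows "quasi_periodic L (D_explicit L a b)"
  unfolding quasi_periodic_def
proof (intro allI)
  fix x y p q
  have "(x + 2 * p) * (y + 2 * q) - a * b = (x * y - a * b) + 2 * (q * (x + 2 * p) + y * p)"
    by (simp add: algebra_simps)
  then have "((x + 2 * p) * (y + 2 * q) - a * b) div 2 = (x * y - a * b) div 2 + (q * (x + 2 * p) + y * p)"
    by simp
  moreover have "even (x + 2 * p - a) \<longleftrightarrow> even (x - a)" "even (y + 2 * q - b) \<longleftrightarrow> even (y - b)"
    by presburger+
  ultimately show "D_explicit L a b (x + 2 * p, y + 2 * q)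
      = L powi (q * (x + 2 * p) + y * p) * D_explicit L a b (x, y)"
    using L by (simp add: D_explicit_def power_int_add mult.commute)
qed

lemma D_cond_iff_explicit: "D_cond \<theta> a b \<phi> \<longleftrightarrow> \<phi> = D_explicit (lam \<theta>) a b"
proof
  assume cond: "D_cond \<theta> a b \<phi>"
  then have Q: "quasi_periodic (lam \<theta>) \<phi>"
    by (simp add: D_cond_def generator_relations_iff_quasi_periodic[symmetric])
  have support: "\<phi> (n, m) \<noteq> 0 \<Longrightarrow> even (n - a) \<and> even (m - b)" and one: "\<phi> (a, b) = 1" for n m
    using cond by (auto simp: D_cond_def even_iff_mod_2_eq_zero)
  show "\<phi> = D_explicit (lam \<theta>) a b"
  proof (rule ext, clarify)
    fix n m
    show "\<phi> (n, m) = D_explicit (lam \<theta>) a b (n, m)"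
      using quasi_periodic_value[OF Q, of n a m b] support[of n m] one
      by (auto simp: D_explicit_def)
  qed
next
  assume \<phi>: "\<phi> = D_explicit (lam \<theta>) a b"
  have "quasi_periodic (lam \<theta>) \<phi>"
    unfolding \<phi> by (rule quasi_periodic_D_explicit[OF lam_nonzero])
  then show "D_cond \<theta> a b \<phi>"
    unfolding D_cond_def generator_relations_iff_quasi_periodic[symmetric]
    by (simp add: \<phi> D_explicit_def even_iff_mod_2_eq_zero)
qed

lemma D_eq_explicit: "D \<theta> a b = D_explicit (lam \<theta>) a b"
  unfolding D_def D_cond_iff_explicit by simp

lemma D_explicit_parity_class:
  assumes "a \<in> {0, 1}" "b \<in> {0, 1}"
  shows "D_explicit L a b (n, m) =
    (if (a, b) = (n mod 2, m mod 2) then L powi ((n * m - a * b) div 2) else 0)"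
proof -
  have "even (n - a) \<longleftrightarrow> a = n mod 2" "even (m - b) \<longleftrightarrow> b = m mod 2"
    using assms by (auto; presburger)+
  then show ?thesis by (simp add: D_explicit_def)
qed

lemma D_explicit_at_base_point:
  assumes "a \<in> {0, 1}" "b \<in> {0, 1}" "a' \<in> {0, 1}" "b' \<in> {0, 1}"
  shows "D_explicit L a b (a', b') = (if (a, b) = (a', b') then 1 else 0)"
proof -
  have "a' mod 2 = a'" "b' mod 2 = b'" using assms(3,4) by auto
  then show ?thesis using assms(1,2) by (simp add: D_explicit_parity_class)
qed

lemma D_explicit_combination_at_base_point:
  assumes "a' \<in> {0, 1}" "b' \<in> {0, 1}"
  shows "(\<Sum>(a, b)\<in>{0::int, 1} \<times> {0::int, 1}. c a b * D_explicit L a b (a', b')) = c a' b'"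
proof -
  have "(\<Sum>(a, b)\<in>{0::int, 1} \<times> {0::int, 1}. c a b * D_explicit L a b (a', b'))
      = (\<Sum>k\<in>{0::int, 1} \<times> {0::int, 1}. if k = (a', b') then c a' b' else 0)"
  proof (intro sum.cong refl)
    fix k assume "k \<in> {0::int, 1} \<times> {0::int, 1}"
    then obtain a b where k: "k = (a, b)" and a: "a \<in> {0, 1}" and b: "b \<in> {0, 1}" by blast
    show "(case k of (a, b) \<Rightarrow> c a b * D_explicit L a b (a', b')) = (if k = (a', b') then c a' b' else 0)"
      unfolding k prod.case D_explicit_at_base_point[OF a b assms] by simp
  qed
  also have "\<dots> = c a' b'"
    using assms by (subst sum.delta) auto
  finally show ?thesis .
qed

lemma quasi_periodic_expansion:
  assumes Q: "quasi_periodic L \<phi>"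
  shows "\<phi> = (\<lambda>k. \<Sum>(a, b)\<in>{0::int, 1} \<times> {0::int, 1}. \<phi> (a, b) * D_explicit L a b k)"
proof (rule ext, clarify)
  fix n m :: int
  define r where "r = (n mod 2, m mod 2)"
  define v where "v = \<phi> r * L powi ((n * m - fst r * snd r) div 2)"
  have r: "r \<in> {0, 1} \<times> {0, 1}" by (auto simp: r_def)
  have "(\<Sum>(a, b)\<in>{0::int, 1} \<times> {0::int, 1}. \<phi> (a, b) * D_explicit L a b (n, m))
      = (\<Sum>k\<in>{0::int, 1} \<times> {0::int, 1}. if k = r then v else 0)"
  proof (intro sum.cong refl)
    fix k assume "k \<in> {0::int, 1} \<times> {0::int, 1}"
    then obtain a b where k: "k = (a, b)" and a: "a \<in> {0, 1}" and b: "b \<in> {0, 1}" by blast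
    show "(case k of (a, b) \<Rightarrow> \<phi> (a, b) * D_explicit L a b (n, m)) = (if k = r then v else 0)"
      unfolding k prod.case D_explicit_parity_class[OF a b] r_def[symmetric] by (auto simp: v_def)
  qed
  also have "\<dots> = v" using r by simp
  also have "\<dots> = \<phi> (n, m)"
    using quasi_periodic_value[OF Q, of n "n mod 2" m "m mod 2"]
    by (simp add: v_def r_def even_iff_mod_2_eq_zero mod_diff_left_eq)
  finally show "\<phi> (n, m) = (\<Sum>(a, b)\<in>{0::int, 1} \<times> {0::int, 1}. \<phi> (a, b) * D_explicit L a b (n, m))" ..
qed

lemma quasi_periodic_linear_combination:
  assumes "\<And>i. i \<in> I \<Longrightarrow> quasi_periodic L (f i)"
  shows "quasi_periodic L (\<lambda>k. \<Sum>i\<in>I. c i * f i k)"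
  using assms unfolding quasi_periodic_def
  by (simp add: sum_distrib_left mult.left_commute)

text \<open>Quasi-periodic series are even: translating -(n,m) by 2(n,m) gives back (n,m)
  with the factor L^0.  So sigma acts trivially on H^0.\<close>
lemma quasi_periodic_sigma_invariant:
  assumes Q: "quasi_periodic L \<phi>"
  shows "sigma \<phi> = \<phi>"
proof (rule ext, clarify)
  fix n m
  have "\<phi> (- n + 2 * n, - m + 2 * m) = L powi (m * (- n + 2 * n) + (- m) * n) * \<phi> (- n, - m)"
    using Q unfolding quasi_periodic_def by blast
  then show "sigma \<phi> (n, m) = \<phi> (n, m)" by (simp add: sigma_def algebra_simps)
qed

lemma D_quasi_periodic: "quasi_periodic (lam \<theta>) (D \<theta> a b)"
  by (simp add: D_eq_explicit quasi_periodic_D_explicit lam_nonzero)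

lemma H0_tw_spanned_by_D:
  "H0_tw \<theta> = {\<phi>. \<exists>c :: int \<Rightarrow> int \<Rightarrow> complex.
      \<phi> = (\<lambda>k. \<Sum>(a, b)\<in>{0::int, 1} \<times> {0::int, 1}. c a b * D \<theta> a b k)}"
proof (intro set_eqI iffI)
  fix \<phi> assume "\<phi> \<in> H0_tw \<theta>"
  then have Q: "quasi_periodic (lam \<theta>) \<phi>" by (simp add: H0_tw_iff_quasi_periodic)
  show "\<phi> \<in> {\<phi>. \<exists>c :: int \<Rightarrow> int \<Rightarrow> complex.
      \<phi> = (\<lambda>k. \<Sum>(a, b)\<in>{0::int, 1} \<times> {0::int, 1}. c a b * D \<theta> a b k)}"
    unfolding mem_Collect_eq D_eq_explicit
    by (intro exI[of _ "\<lambda>a b. \<phi> (a, b)"]) (rule quasi_periodic_expansion[OF Q])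
next
  fix \<phi> assume "\<phi> \<in> {\<phi>. \<exists>c :: int \<Rightarrow> int \<Rightarrow> complex.
      \<phi> = (\<lambda>k. \<Sum>(a, b)\<in>{0::int, 1} \<times> {0::int, 1}. c a b * D \<theta> a b k)}"
  then obtain c :: "int \<Rightarrow> int \<Rightarrow> complex"
    where \<phi>: "\<phi> = (\<lambda>k. \<Sum>(a, b)\<in>{0::int, 1} \<times> {0::int, 1}. c a b * D \<theta> a b k)"
    unfolding mem_Collect_eq ..
  have "quasi_periodic (lam \<theta>)
      (\<lambda>k. \<Sum>i\<in>{0::int, 1} \<times> {0::int, 1}. (\<lambda>(a, b). c a b) i * (\<lambda>(a, b). D \<theta> a b) i k)"
    by (rule quasi_periodic_linear_combination) (clarsimp simp: D_quasi_periodic)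
  then show "\<phi> \<in> H0_tw \<theta>"
    unfolding \<phi> H0_tw_iff_quasi_periodic case_prod_unfold .
qed

lemma D_linearly_independent:
  assumes zero: "(\<lambda>k. \<Sum>(a, b)\<in>{0::int, 1} \<times> {0::int, 1}. c a b * D \<theta> a b k) = (\<lambda>k. 0)"
    and a: "a \<in> {0, 1}" and b: "b \<in> {0, 1}"
  shows "c a b = 0"
proof -
  have "c a b = (\<Sum>(a', b')\<in>{0::int, 1} \<times> {0::int, 1}. c a' b' * D \<theta> a' b' (a, b))"
    unfolding D_eq_explicit by (rule D_explicit_combination_at_base_point[OF a b, symmetric])
  also have "\<dots> = 0"
    using fun_cong[OF zero, of "(a, b)"] by (simp only:)
  finally show "c a b = 0" .
qed

theorem mainTheorem5:
  fixes \<theta> :: real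
  assumes "\<theta> \<notin> \<rat>"
  shows "(\<forall>a\<in>{0,1}. \<forall>b\<in>{0,1}. \<exists>!\<phi>. D_cond \<theta> a b \<phi>)
    \<and> (\<forall>a\<in>{0,1}. \<forall>b\<in>{0,1}. D \<theta> a b \<in> H0_tw \<theta>)
    \<and> H0_tw \<theta> = {\<phi>. \<exists>c :: int \<Rightarrow> int \<Rightarrow> complex.
          \<phi> = (\<lambda>k. \<Sum>(a, b)\<in>{0,1} \<times> {0,1}. c a b * D \<theta> a b k)}
    \<and> (\<forall>c :: int \<Rightarrow> int \<Rightarrow> complex.
          (\<lambda>k. \<Sum>(a, b)\<in>{0::int,1} \<times> {0::int,1}. c a b * D \<theta> a b k) = (\<lambda>k. 0)
          \<longrightarrow> (\<forall>a\<in>{0,1}. \<forall>b\<in>{0,1}. c a b = 0))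
    \<and> (\<forall>\<phi>\<in>H0_tw \<theta>. sigma \<phi> = \<phi>)"
proof (intro conjI)
  show "\<forall>a\<in>{0,1}. \<forall>b\<in>{0,1}. \<exists>!\<phi>. D_cond \<theta> a b \<phi>"
    by (simp add: D_cond_iff_explicit)
  show "\<forall>a\<in>{0,1}. \<forall>b\<in>{0,1}. D \<theta> a b \<in> H0_tw \<theta>"
    by (simp add: H0_tw_iff_quasi_periodic D_quasi_periodic)
  show "H0_tw \<theta> = {\<phi>. \<exists>c :: int \<Rightarrow> int \<Rightarrow> complex.
          \<phi> = (\<lambda>k. \<Sum>(a, b)\<in>{0,1} \<times> {0,1}. c a b * D \<theta> a b k)}"
    by (rule H0_tw_spanned_by_D)
  show "\<forall>c :: int \<Rightarrow> int \<Rightarrow> complex.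
          (\<lambda>k. \<Sum>(a, b)\<in>{0::int,1} \<times> {0::int,1}. c a b * D \<theta> a b k) = (\<lambda>k. 0)
          \<longrightarrow> (\<forall>a\<in>{0,1}. \<forall>b\<in>{0,1}. c a b = 0)"
    using D_linearly_independent by blast
  show "\<forall>\<phi>\<in>H0_tw \<theta>. sigma \<phi> = \<phi>"
    by (simp add: H0_tw_iff_quasi_periodic quasi_periodic_sigma_invariant)
qed

end
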